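(* Let $g:\mathbb{R}^N\to\mathbb{R}$ and a family of random functions $g(\theta,\xi)$ differentiable in $\theta$ be given. Given $\theta_1,v_0\in\mathbb{R}^N$, define for $n\ge1$: $v_n=\alpha v_{n-1}+\epsilon_n\nabla_\theta g(\theta_n,\xi_n)$, $\theta_{n+1}=\theta_n-v_n$. Assume: (i) the $\xi_n$ are mutually independent and independent of $\theta_1,v_0$, and $g(x)=\mathbb{E}_{\xi_n}(g(x,\xi_n))$ for all $x$, $n$; (ii) $g$ is non-negative and continuously differentiable; $\{\theta:\nabla g(\theta)=0\}\ne\emptyset$; $\|\nabla g(x)-\nabla g(y)\|\le c\|x-y\|$ for some $c>0$; and there is $M>0$ with $\mathbb{E}_{\xi_n}\big(\|\nabla_\theta g(\theta)-\nabla_\theta g(\theta,\xi_n)\|^2\big)\le M(1+g(\theta))$ for all $\theta$, $n$; (iii) $\alpha\in[0,1)$, and $\epsilon_n>0$ decreases monotonically to $0$ with $\sum\epsilon_n=\infty$, $\sum\epsilon_n^2<\infty$. Then there is a constant $B(v_0,\theta_1)>0$ depending only on $v_0$ and $\theta_1$ such that for all $n\ge1$, $$\sum_{t=1}^n\epsilon_t\,\mathbb{E}\big(\|\nabla_\theta g(\theta_t)\|^2\big)<B(v_0,\theta_1)<+\infty,$$ and $\sum_{t=1}^{\infty}\epsilon_t\|\nabla_\theta g(\theta_t)\|^2<+\infty$ almost surely.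
   Context: $\|\cdot\|$ is the Euclidean norm; $\mathbb{E}_{\xi_n}$ denotes expectation with respect to $\xi_n$ only. *)

theory Defs
  imports "HOL-Probability.Probability"
begin

text \<open>Stochastic gradient descent with heavy-ball momentum.
  The state after k steps is (theta_(k+1), v_k):
  v_n = alpha v_(n-1) + eps_n DG(theta_n, xi_n),  theta_(n+1) = theta_n - v_n.\<close>

fun sgdm_state ::
  "real \<Rightarrow> (nat \<Rightarrow> real) \<Rightarrow> ('a::real_vector \<Rightarrow> 'b \<Rightarrow> 'a) \<Rightarrow> (nat \<Rightarrow> 'w \<Rightarrow> 'b)
    \<Rightarrow> 'a \<Rightarrow> 'a \<Rightarrow> nat \<Rightarrow> 'w \<Rightarrow> 'a \<times> 'a" where
  "sgdm_state \<alpha> \<epsilon> DG \<xi> \<theta>1 v0 0 \<omega> = (\<theta>1, v0)"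
| "sgdm_state \<alpha> \<epsilon> DG \<xi> \<theta>1 v0 (Suc k) \<omega> =
     (let (\<theta>, v) = sgdm_state \<alpha> \<epsilon> DG \<xi> \<theta>1 v0 k \<omega>;
          v' = \<alpha> *\<^sub>R v + \<epsilon> (Suc k) *\<^sub>R DG \<theta> (\<xi> (Suc k) \<omega>)
      in (\<theta> - v', v'))"

text \<open>theta_n for n >= 1 (the value at n = 0 is irrelevant).\<close>
definition sgdm_theta ::
  "real \<Rightarrow> (nat \<Rightarrow> real) \<Rightarrow> ('a::real_vector \<Rightarrow> 'b \<Rightarrow> 'a) \<Rightarrow> (nat \<Rightarrow> 'w \<Rightarrow> 'b)
    \<Rightarrow> 'a \<Rightarrow> 'a \<Rightarrow> nat \<Rightarrow> 'w \<Rightarrow> 'a" where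
  "sgdm_theta \<alpha> \<epsilon> DG \<xi> \<theta>1 v0 n \<omega> = fst (sgdm_state \<alpha> \<epsilon> DG \<xi> \<theta>1 v0 (n - 1) \<omega>)"

end

theory Submission
  imports Defs "HOL-Probability.Probability"
begin

(* With beta = alpha / (1 - alpha), the shifted point z_n = theta_n - beta v_(n-1) performs a plain
   stochastic gradient step z_(n+1) = z_n - eps_n / (1 - alpha) DG(theta_n, xi_n).  Hence the Lyapunov
   function Phi(theta, v) = 2 (g(theta - beta v) + kappa |v|^2) satisfies, by the quadratic upper bound
   for functions with Lipschitz gradient, the unbiasedness of DG and the variance bound,
     E Phi_(n+1) + eps_n E |Dg theta_n|^2 <= (1 + C eps_n^2) E Phi_n + 2 C eps_n^2.
   Since sum eps_n^2 < oo, a discrete Gronwall argument bounds sum_t eps_t E |Dg theta_t|^2 by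
   exp (C sum eps^2) (Phi(theta_1, v_0) + 2 C sum eps^2), and a series of non-negative random variables
   with finite expectation converges almost surely.  Unbiasedness E DG(x, xi) = Dg x is not assumed: it is
   obtained by differentiating g = E G under the expectation, the difference quotients of G being bounded
   in L^2 thanks to the variance bound. *)

lemma has_real_derivative_along_line:
  fixes f :: "'a::real_inner \<Rightarrow> real"
  assumes "\<And>y. (f has_derivative (\<lambda>h. Df y \<bullet> h)) (at y)"
  shows "((\<lambda>t. f (x + t *\<^sub>R d)) has_real_derivative (Df (x + t *\<^sub>R d) \<bullet> d)) (at t)"
proof -
  have "((\<lambda>t. x + t *\<^sub>R d) has_derivative (\<lambda>h. h *\<^sub>R d)) (at t)"
    by (auto intro!: derivative_eq_intros)
  from has_derivative_compose[OF this assms[of "x + t *\<^sub>R d"]]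
  have "((\<lambda>t. f (x + t *\<^sub>R d)) has_derivative (\<lambda>h. Df (x + t *\<^sub>R d) \<bullet> (h *\<^sub>R d))) (at t)"
    by (simp add: o_def)
  then show ?thesis
    unfolding has_field_derivative_def
    by (rule has_derivative_eq_rhs) (simp add: fun_eq_iff mult.commute)
qed

lemma lipschitz_gradient_upper_bound:
  fixes g :: "'a::real_inner \<Rightarrow> real"
  assumes g_deriv: "\<And>x. (g has_derivative (\<lambda>h. Dg x \<bullet> h)) (at x)"
    and lip: "\<And>x y. norm (Dg x - Dg y) \<le> c * norm (x - y)"
  shows "g y \<le> g x + Dg x \<bullet> (y - x) + c / 2 * (norm (y - x))\<^sup>2"
proof -
  define d where "d = y - x"
  define k where "k t = g (x + t *\<^sub>R d) - t * (Dg x \<bullet> d) - c / 2 * t\<^sup>2 * (norm d)\<^sup>2" for t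
  have "k 1 \<le> k 0"
  proof (rule DERIV_nonpos_imp_nonincreasing[of 0 1 k])
    fix t :: real assume t: "0 \<le> t" "t \<le> 1"
    have k_deriv: "(k has_real_derivative
        (Dg (x + t *\<^sub>R d) \<bullet> d - Dg x \<bullet> d - c * t * (norm d)\<^sup>2)) (at t)"
      unfolding k_def
      by (rule derivative_eq_intros has_real_derivative_along_line[OF g_deriv] refl | simp)+
    have "Dg (x + t *\<^sub>R d) \<bullet> d - Dg x \<bullet> d \<le> norm (Dg (x + t *\<^sub>R d) - Dg x) * norm d"
      by (metis inner_diff_left norm_cauchy_schwarz)
    also have "\<dots> \<le> c * t * (norm d)\<^sup>2"
      using mult_right_mono[OF lip[of "x + t *\<^sub>R d" x] norm_ge_zero[of d]] t
      by (simp add: power2_eq_square mult.assoc)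
    finally show "\<exists>y. (k has_real_derivative y) (at t) \<and> y \<le> 0"
      using k_deriv by auto
  qed auto
  then show ?thesis by (simp add: k_def d_def algebra_simps)
qed

lemma norm_gradient_sq_le:
  fixes g :: "'a::real_inner \<Rightarrow> real"
  assumes "\<And>x. (g has_derivative (\<lambda>h. Dg x \<bullet> h)) (at x)"
    and "\<And>x y. norm (Dg x - Dg y) \<le> c * norm (x - y)"
    and "0 < c" and "\<And>x. 0 \<le> g x"
  shows "(norm (Dg y))\<^sup>2 \<le> 2 * c * g y"
proof -
  let ?y = "y - (1 / c) *\<^sub>R Dg y"
  have "0 \<le> g ?y" by fact
  also have "g ?y \<le> g y + Dg y \<bullet> (?y - y) + c / 2 * (norm (?y - y))\<^sup>2"
    by (rule lipschitz_gradient_upper_bound[OF assms(1,2)])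
  also have "\<dots> = g y - (norm (Dg y))\<^sup>2 / (2 * c)"
    using \<open>0 < c\<close> by (simp add: dot_square_norm power2_eq_square field_simps)
  finally show ?thesis using \<open>0 < c\<close> by (simp add: field_simps)
qed

lemma inner_lipschitz_ge:
  fixes F :: "'a::real_inner \<Rightarrow> 'b::real_inner"
  assumes "norm (F x - F y) \<le> c * norm (x - y)"
  shows "(norm (F x))\<^sup>2 / 2 - c\<^sup>2 * (norm (x - y))\<^sup>2 / 2 \<le> F x \<bullet> F y"
proof -
  have "(norm (F x - F y))\<^sup>2 \<le> c\<^sup>2 * (norm (x - y))\<^sup>2"
    using power_mono[OF assms norm_ge_zero] by (simp add: power_mult_distrib)
  then show ?thesis
    unfolding dot_norm_neg[of "F x"] using zero_le_power2[of "norm (F y)"] by argo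
qed

lemma norm_add_sq_le:
  fixes a b :: "'a::real_normed_vector"
  shows "(norm (a + b))\<^sup>2 \<le> 2 * (norm a)\<^sup>2 + 2 * (norm b)\<^sup>2"
proof -
  have "(norm (a + b))\<^sup>2 \<le> (norm a + norm b)\<^sup>2"
    by (intro power_mono norm_triangle_ineq) auto
  also have "\<dots> \<le> 2 * (norm a)\<^sup>2 + 2 * (norm b)\<^sup>2"
    using zero_le_power2[of "norm a - norm b"] by (simp add: power2_eq_square algebra_simps)
  finally show ?thesis .
qed

lemma norm_momentum_sq_le:
  fixes v d :: "'a::real_normed_vector"
  assumes "0 \<le> \<alpha>" "\<alpha> < 1" "0 \<le> \<epsilon>"
  shows "(norm (\<alpha> *\<^sub>R v + \<epsilon> *\<^sub>R d))\<^sup>2 \<le> \<alpha> * (norm v)\<^sup>2 + \<epsilon>\<^sup>2 / (1 - \<alpha>) * (norm d)\<^sup>2"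
proof -
  define a b where "a = norm v" and "b = \<epsilon> * norm d / (1 - \<alpha>)"
  have "norm (\<alpha> *\<^sub>R v + \<epsilon> *\<^sub>R d) \<le> \<alpha> * a + (1 - \<alpha>) * b"
    using norm_triangle_ineq[of "\<alpha> *\<^sub>R v" "\<epsilon> *\<^sub>R d"] assms by (simp add: a_def b_def)
  then have "(norm (\<alpha> *\<^sub>R v + \<epsilon> *\<^sub>R d))\<^sup>2 \<le> (\<alpha> * a + (1 - \<alpha>) * b)\<^sup>2"
    by (intro power_mono) auto
  \<comment> \<open>convexity of the square, with weights \<open>\<alpha>\<close> and \<open>1 - \<alpha>\<close>\<close>
  also have "\<dots> = \<alpha> * a\<^sup>2 + (1 - \<alpha>) * b\<^sup>2 - \<alpha> * (1 - \<alpha>) * (a - b)\<^sup>2"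
    by (simp add: power2_eq_square algebra_simps)
  also have "\<dots> \<le> \<alpha> * a\<^sup>2 + (1 - \<alpha>) * b\<^sup>2"
    using assms by simp
  also have "(1 - \<alpha>) * b\<^sup>2 = \<epsilon>\<^sup>2 / (1 - \<alpha>) * (norm d)\<^sup>2"
    using assms unfolding b_def by (simp add: power_divide power_mult_distrib power2_eq_square)
  finally show ?thesis by (simp add: a_def)
qed

lemma has_integral_sq_ge:
  fixes f :: "real \<Rightarrow> real"
  assumes h: "0 < h" and I: "(f has_integral I) {0..h}"
    and J: "((\<lambda>s. (f s)\<^sup>2) has_integral J) {0..h}"
  shows "I\<^sup>2 / h \<le> J"
proof -
  define a where "a = I / h"
  have "((\<lambda>s. (f s)\<^sup>2 - 2 * a * f s + a\<^sup>2) has_integral (J - 2 * a * I + a\<^sup>2 * h)) {0..h}"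
    using h
    by (intro has_integral_diff has_integral_add has_integral_mult_right J I
        has_integral_const_real[THEN has_integral_eq_rhs]) (auto simp: content_real)
  then have "((\<lambda>s. (f s - a)\<^sup>2) has_integral (J - 2 * a * I + a\<^sup>2 * h)) {0..h}"
    by (rule has_integral_eq[rotated]) (simp add: power2_eq_square algebra_simps)
  then have "0 \<le> J - 2 * a * I + a\<^sup>2 * h"
    by (rule has_integral_nonneg) auto
  then show ?thesis using h by (simp add: a_def power2_eq_square field_simps)
qed

lemma integrable_if_nn_integral_le:
  fixes f :: "'a \<Rightarrow> real"
  assumes "f \<in> borel_measurable M" "\<And>x. 0 \<le> f x"
    and "(\<integral>\<^sup>+x. ennreal (f x) \<partial>M) \<le> ennreal K" "0 \<le> K"
  shows "integrable M f" "integral\<^sup>L M f \<le> K"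
proof -
  show int: "integrable M f"
    using assms by (intro integrableI_nonneg) (auto simp: top_unique intro: le_less_trans)
  have "ennreal (integral\<^sup>L M f) \<le> ennreal K"
    using assms int by (subst nn_integral_eq_integral[symmetric]) auto
  then show "integral\<^sup>L M f \<le> K"
    using assms by (simp add: ennreal_le_iff)
qed

lemma abs_le_min_add_sq_div:
  fixes d T :: real
  assumes "0 < T"
  shows "\<bar>d\<bar> \<le> min \<bar>d\<bar> T + d\<^sup>2 / T"
proof (cases "\<bar>d\<bar> \<le> T")
  case False
  then have "T * \<bar>d\<bar> \<le> \<bar>d\<bar> * \<bar>d\<bar>"
    by (intro mult_right_mono) auto
  then have "\<bar>d\<bar> \<le> d\<^sup>2 / T"
    using assms by (simp add: power2_eq_square field_simps)
  then show ?thesis using assms False by simp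
qed (use assms in simp)

lemma (in finite_measure) integral_tendsto_zero_if_L2_bounded:
  fixes D :: "nat \<Rightarrow> 'a \<Rightarrow> real"
  assumes lim: "\<And>x. x \<in> space M \<Longrightarrow> (\<lambda>j. D j x) \<longlonglongrightarrow> 0"
    and int: "\<And>j. integrable M (D j)"
    and sq_int: "\<And>j. integrable M (\<lambda>x. (D j x)\<^sup>2)"
    and sq_bound: "\<And>j. (\<integral>x. (D j x)\<^sup>2 \<partial>M) \<le> K"
  shows "(\<lambda>j. \<integral>x. D j x \<partial>M) \<longlonglongrightarrow> 0"
proof (rule metric_LIMSEQ_I)
  fix r :: real assume "0 < r"
  have "0 \<le> (\<integral>x. (D 0 x)\<^sup>2 \<partial>M)" by simp
  then have "0 \<le> K" using sq_bound[of 0] by linarith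
  \<comment> \<open>truncate at \<open>T\<close>: the truncated parts vanish by dominated convergence, the tails contribute \<open>K / T\<close>\<close>
  define T where "T = 2 * K / r + 1"
  have "0 < T" using \<open>0 \<le> K\<close> \<open>0 < r\<close> by (simp add: T_def add_nonneg_pos)
  have "K / T < r / 2"
    using \<open>0 \<le> K\<close> \<open>0 < r\<close> \<open>0 < T\<close> by (simp add: T_def field_simps)
  have trunc_int: "integrable M (\<lambda>x. min \<bar>D j x\<bar> T)" for j
    using int[of j] by (intro integrable_const_bound[where B=T]) (use \<open>0 < T\<close> in auto)
  have "(\<lambda>j. \<integral>x. min \<bar>D j x\<bar> T \<partial>M) \<longlonglongrightarrow> (\<integral>x. 0 \<partial>M)"
  proof (rule integral_dominated_convergence[where w="\<lambda>_. T"])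
    show "AE x in M. (\<lambda>j. min \<bar>D j x\<bar> T) \<longlonglongrightarrow> 0"
    proof (rule AE_I2)
      fix x assume "x \<in> space M"
      then have "(\<lambda>j. min \<bar>D j x\<bar> T) \<longlonglongrightarrow> min \<bar>0\<bar> T"
        by (intro tendsto_min tendsto_rabs tendsto_const lim)
      then show "(\<lambda>j. min \<bar>D j x\<bar> T) \<longlonglongrightarrow> 0" using \<open>0 < T\<close> by simp
    qed
  qed (use \<open>0 < T\<close> int in auto)
  from order_tendstoD(2)[OF this, of "r / 2"] obtain N
    where N: "\<And>j. j \<ge> N \<Longrightarrow> (\<integral>x. min \<bar>D j x\<bar> T \<partial>M) < r / 2"
    using \<open>0 < r\<close> by (auto simp: eventually_sequentially)
  have bound: "\<bar>\<integral>x. D j x \<partial>M\<bar> \<le> (\<integral>x. min \<bar>D j x\<bar> T \<partial>M) + K / T" for j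
  proof -
    have "\<bar>\<integral>x. D j x \<partial>M\<bar> \<le> (\<integral>x. min \<bar>D j x\<bar> T + (D j x)\<^sup>2 / T \<partial>M)"
      using int trunc_int sq_int abs_le_min_add_sq_div[OF \<open>0 < T\<close>]
      by (intro order_trans[OF integral_abs_bound integral_mono]) auto
    also have "\<dots> \<le> (\<integral>x. min \<bar>D j x\<bar> T \<partial>M) + K / T"
      using trunc_int sq_int sq_bound[of j] \<open>0 < T\<close> by (simp add: divide_right_mono)
    finally show ?thesis .
  qed
  show "\<exists>N. \<forall>j\<ge>N. dist (\<integral>x. D j x \<partial>M) 0 < r"
  proof (intro exI allI impI)
    fix j assume "N \<le> j"
    with N[OF \<open>N \<le> j\<close>] bound[of j] \<open>K / T < r / 2\<close> show "dist (\<integral>x. D j x \<partial>M) 0 < r"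
      unfolding dist_real_def diff_zero by linarith
  qed
qed

section \<open>Stochastic gradients\<close>

lemma difference_quotient_tendsto:
  assumes "(f has_real_derivative f') (at 0)"
  shows "(\<lambda>j. (f (inverse (real (Suc j))) - f 0) / inverse (real (Suc j))) \<longlonglongrightarrow> f'"
proof -
  have lim: "((\<lambda>k. (f (0 + k) - f 0) / k) \<longlongrightarrow> f') (at 0)"
    using assms by (simp add: DERIV_def)
  have "filterlim (\<lambda>j. inverse (real (Suc j))) (at 0) sequentially"
    by (rule filterlim_atI[OF LIMSEQ_inverse_real_of_nat]) auto
  from filterlim_compose[OF lim this] show ?thesis
    by simp
qed

locale stochastic_gradient = prob_space \<mu> for \<mu> :: "'b measure" +
  fixes g :: "'a::euclidean_space \<Rightarrow> real" and Dg :: "'a \<Rightarrow> 'a"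
    and G :: "'a \<Rightarrow> 'b \<Rightarrow> real" and DG :: "'a \<Rightarrow> 'b \<Rightarrow> 'a"
    and c M :: real
  assumes DG_measurable[measurable]: "(\<lambda>(x, e). DG x e) \<in> borel_measurable (borel \<Otimes>\<^sub>M \<mu>)"
    and G_has_derivative:
      "\<And>x e. e \<in> space \<mu> \<Longrightarrow> ((\<lambda>y. G y e) has_derivative (\<lambda>h. DG x e \<bullet> h)) (at x)"
    and g_expectation: "\<And>x. has_bochner_integral \<mu> (G x) (g x)"
    and g_has_derivative: "\<And>x. (g has_derivative (\<lambda>h. Dg x \<bullet> h)) (at x)"
    and Dg_lipschitz: "\<And>x y. norm (Dg x - Dg y) \<le> c * norm (x - y)"
    and c_pos: "0 < c"
    and M_nonneg: "0 \<le> M"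
    and g_nonneg: "\<And>x. 0 \<le> g x"
    and variance_bound:
      "\<And>x. (\<integral>\<^sup>+ e. ennreal ((norm (Dg x - DG x e))\<^sup>2) \<partial>\<mu>) \<le> ennreal (M * (1 + g x))"
begin

lemma G_integrable: "integrable \<mu> (G x)"
  using g_expectation[of x] by (simp add: has_bochner_integral_iff)

lemma G_measurable[measurable]: "G x \<in> borel_measurable \<mu>"
  using G_integrable by (rule borel_measurable_integrable)

lemma Dg_continuous: "continuous_on UNIV Dg"
proof (rule lipschitz_on_continuous_on)
  show "c-lipschitz_on UNIV Dg"
    by (rule lipschitz_onI) (use Dg_lipschitz c_pos in \<open>auto simp: dist_norm\<close>)
qed

lemma g_continuous: "continuous_on UNIV g"
  using g_has_derivative by (meson continuous_at_imp_continuous_on has_derivative_continuous)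

lemma Dg_measurable[measurable]: "Dg \<in> borel_measurable borel"
  using Dg_continuous by (rule borel_measurable_continuous_onI)

lemma g_measurable[measurable]: "g \<in> borel_measurable borel"
  using g_continuous by (rule borel_measurable_continuous_onI)

lemma norm_gradient_sq_le_g: "(norm (Dg x))\<^sup>2 \<le> 2 * c * g x"
  using g_has_derivative Dg_lipschitz c_pos g_nonneg by (rule norm_gradient_sq_le)

lemma g_upper_bound: "g y \<le> g x + Dg x \<bullet> (y - x) + c / 2 * (norm (y - x))\<^sup>2"
  using g_has_derivative Dg_lipschitz by (rule lipschitz_gradient_upper_bound)

lemma nn_integral_norm_DG_sq_le:
  "(\<integral>\<^sup>+ e. ennreal ((norm (DG x e))\<^sup>2) \<partial>\<mu>) \<le> ennreal (2 * (norm (Dg x))\<^sup>2 + 2 * M * (1 + g x))"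
proof -
  have pointwise: "(norm (DG x e))\<^sup>2 \<le> 2 * (norm (Dg x))\<^sup>2 + 2 * (norm (Dg x - DG x e))\<^sup>2" for e
    using norm_add_sq_le[of "Dg x" "DG x e - Dg x"] by (simp add: norm_minus_commute)
  have "(\<integral>\<^sup>+ e. ennreal ((norm (DG x e))\<^sup>2) \<partial>\<mu>)
      \<le> (\<integral>\<^sup>+ e. ennreal (2 * (norm (Dg x))\<^sup>2) + 2 * ennreal ((norm (Dg x - DG x e))\<^sup>2) \<partial>\<mu>)"
    by (intro nn_integral_mono order_trans[OF ennreal_leI[OF pointwise]])
      (simp add: ennreal_plus ennreal_mult)
  also have "\<dots> = ennreal (2 * (norm (Dg x))\<^sup>2)
      + 2 * (\<integral>\<^sup>+ e. ennreal ((norm (Dg x - DG x e))\<^sup>2) \<partial>\<mu>)"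
    by (subst nn_integral_add) (auto simp: nn_integral_cmult emeasure_space_1)
  also have "\<dots> \<le> ennreal (2 * (norm (Dg x))\<^sup>2) + 2 * ennreal (M * (1 + g x))"
    by (intro add_left_mono mult_left_mono variance_bound) auto
  also have "\<dots> = ennreal (2 * (norm (Dg x))\<^sup>2 + 2 * M * (1 + g x))"
    using M_nonneg g_nonneg[of x] by (simp add: ennreal_mult ennreal_plus mult.assoc)
  finally show ?thesis .
qed

lemma
  shows integrable_norm_DG_sq: "integrable \<mu> (\<lambda>e. (norm (DG x e))\<^sup>2)"
    and integral_norm_DG_sq_le:
      "(\<integral>e. (norm (DG x e))\<^sup>2 \<partial>\<mu>) \<le> 2 * (norm (Dg x))\<^sup>2 + 2 * M * (1 + g x)"
  using integrable_if_nn_integral_le[OF _ _ nn_integral_norm_DG_sq_le] M_nonneg g_nonneg[of x]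
  by auto

lemma nn_integral_DG_inner_sq_le:
  "(\<integral>\<^sup>+ e. ennreal ((DG x e \<bullet> u)\<^sup>2) \<partial>\<mu>)
    \<le> ennreal ((2 * (norm (Dg x))\<^sup>2 + 2 * M * (1 + g x)) * (norm u)\<^sup>2)"
proof -
  have "(DG x e \<bullet> u)\<^sup>2 \<le> (norm (DG x e))\<^sup>2 * (norm u)\<^sup>2" for e
    using power_mono[OF Cauchy_Schwarz_ineq2[of "DG x e" u] abs_ge_zero, of 2]
    by (simp add: power_mult_distrib)
  then have "(\<integral>\<^sup>+ e. ennreal ((DG x e \<bullet> u)\<^sup>2) \<partial>\<mu>)
      \<le> (\<integral>\<^sup>+ e. ennreal ((norm (DG x e))\<^sup>2) * ennreal ((norm u)\<^sup>2) \<partial>\<mu>)"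
    by (intro nn_integral_mono) (simp add: ennreal_leI flip: ennreal_mult)
  also have "\<dots> = (\<integral>\<^sup>+ e. ennreal ((norm (DG x e))\<^sup>2) \<partial>\<mu>) * ennreal ((norm u)\<^sup>2)"
    by (rule nn_integral_multc) measurable
  also have "\<dots> \<le> ennreal (2 * (norm (Dg x))\<^sup>2 + 2 * M * (1 + g x)) * ennreal ((norm u)\<^sup>2)"
    by (intro mult_right_mono nn_integral_norm_DG_sq_le) auto
  finally show ?thesis
    using M_nonneg g_nonneg[of x] by (simp add: ennreal_mult)
qed

lemma directional_second_moment_bounded:
  "\<exists>K\<ge>0. \<forall>s\<in>{0..1}. (\<integral>\<^sup>+ e. ennreal ((DG (x + s *\<^sub>R u) e \<bullet> u)\<^sup>2) \<partial>\<mu>) \<le> ennreal K"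
proof -
  define b where "b s = (2 * (norm (Dg (x + s *\<^sub>R u)))\<^sup>2 + 2 * M * (1 + g (x + s *\<^sub>R u))) * (norm u)\<^sup>2"
    for s :: real
  have "continuous_on {0..1} (\<lambda>s. Dg (x + s *\<^sub>R u))" "continuous_on {0..1} (\<lambda>s. g (x + s *\<^sub>R u))"
    by (intro continuous_on_compose2[OF Dg_continuous] continuous_on_compose2[OF g_continuous]
        continuous_intros; simp)+
  then have "continuous_on {0..1} b"
    unfolding b_def by (intro continuous_intros)
  then obtain s0 where "\<forall>s\<in>{0..1}. b s \<le> b s0"
    using continuous_attains_sup[of "{0..1}" b] by auto
  show ?thesis
  proof (intro exI[of _ "b s0"] conjI ballI)
    show "0 \<le> b s0"
      using M_nonneg g_nonneg by (simp add: b_def)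
    fix s :: real assume "s \<in> {0..1}"
    have "(\<integral>\<^sup>+ e. ennreal ((DG (x + s *\<^sub>R u) e \<bullet> u)\<^sup>2) \<partial>\<mu>) \<le> ennreal (b s)"
      unfolding b_def by (rule nn_integral_DG_inner_sq_le)
    also have "\<dots> \<le> ennreal (b s0)"
      using \<open>\<forall>s\<in>{0..1}. b s \<le> b s0\<close> \<open>s \<in> {0..1}\<close> by (intro ennreal_leI) blast
    finally show "(\<integral>\<^sup>+ e. ennreal ((DG (x + s *\<^sub>R u) e \<bullet> u)\<^sup>2) \<partial>\<mu>) \<le> ennreal (b s0)" .
  qed
qed

lemma difference_quotient_sq_le_line_integral:
  assumes e: "e \<in> space \<mu>" and h: "0 < h"
  shows "ennreal ((G (x + h *\<^sub>R u) e - G x e)\<^sup>2 / h)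
    \<le> (\<integral>\<^sup>+ s. ennreal (indicator {0..h} s * (DG (x + s *\<^sub>R u) e \<bullet> u)\<^sup>2) \<partial>lborel)"
    (is "_ \<le> ?J")
proof (cases ?J)
  case (real J)
  let ?f = "\<lambda>s. DG (x + s *\<^sub>R u) e \<bullet> u"
  have "?f \<in> borel_measurable borel"
    using measurable_Pair_compose_split[OF DG_measurable, of "\<lambda>s. x + s *\<^sub>R u" borel "\<lambda>s. e"] e
    by measurable
  then have "((\<lambda>s. indicator {0..h} s * (?f s)\<^sup>2) has_integral J) UNIV"
    using real by (intro nn_integral_has_integral) auto
  moreover have "(\<lambda>s. indicator {0..h} s * (?f s)\<^sup>2) = (\<lambda>s. if s \<in> {0..h} then (?f s)\<^sup>2 else 0)"
    by (auto simp: fun_eq_iff indicator_def)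
  ultimately have J: "((\<lambda>s. (?f s)\<^sup>2) has_integral J) {0..h}"
    by (simp only: has_integral_restrict_UNIV)
  have I: "(?f has_integral (G (x + h *\<^sub>R u) e - G (x + 0 *\<^sub>R u) e)) {0..h}"
  proof (rule fundamental_theorem_of_calculus)
    fix t assume "t \<in> {0..h}"
    have "((\<lambda>t. G (x + t *\<^sub>R u) e) has_real_derivative ?f t) (at t)"
      using G_has_derivative[OF e] by (rule has_real_derivative_along_line)
    then show "((\<lambda>t. G (x + t *\<^sub>R u) e) has_vector_derivative ?f t) (at t within {0..h})"
      by (simp add: has_real_derivative_iff_has_vector_derivative has_vector_derivative_at_within)
  qed (use h in simp)
  have "(G (x + h *\<^sub>R u) e - G x e)\<^sup>2 / h \<le> J"
    using has_integral_sq_ge[OF h I J] by simp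
  then show ?thesis
    using real by (simp add: ennreal_leI)
qed simp

lemma difference_quotient_second_moment:
  assumes K: "\<forall>s\<in>{0..1}. (\<integral>\<^sup>+ e. ennreal ((DG (x + s *\<^sub>R u) e \<bullet> u)\<^sup>2) \<partial>\<mu>) \<le> ennreal K" "0 \<le> K"
    and h: "0 < h" "h \<le> 1"
  shows "integrable \<mu> (\<lambda>e. ((G (x + h *\<^sub>R u) e - G x e) / h)\<^sup>2)"
    and "(\<integral>e. ((G (x + h *\<^sub>R u) e - G x e) / h)\<^sup>2 \<partial>\<mu>) \<le> K"
proof -
  let ?F = "\<lambda>e. (G (x + h *\<^sub>R u) e - G x e)\<^sup>2 / h"
  have F_measurable: "?F \<in> borel_measurable \<mu>"
    by measurable
  have "(\<integral>\<^sup>+ e. ennreal (?F e) \<partial>\<mu>)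
      \<le> (\<integral>\<^sup>+ e. \<integral>\<^sup>+ s. ennreal (indicator {0..h} s * (DG (x + s *\<^sub>R u) e \<bullet> u)\<^sup>2) \<partial>lborel \<partial>\<mu>)"
    by (intro nn_integral_mono difference_quotient_sq_le_line_integral h)
  also have "\<dots> = (\<integral>\<^sup>+ s. \<integral>\<^sup>+ e. ennreal (indicator {0..h} s * (DG (x + s *\<^sub>R u) e \<bullet> u)\<^sup>2) \<partial>\<mu> \<partial>lborel)"
  proof -
    interpret pair_sigma_finite \<mu> lborel
      by (intro pair_sigma_finite.intro sigma_finite_measure_axioms lborel.sigma_finite_measure_axioms)
    show ?thesis
      by (rule Fubini'[symmetric]) measurable
  qed
  also have "\<dots> \<le> (\<integral>\<^sup>+ s. ennreal K * indicator {0..h} s \<partial>lborel)"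
  proof (rule nn_integral_mono)
    fix s :: real
    show "(\<integral>\<^sup>+ e. ennreal (indicator {0..h} s * (DG (x + s *\<^sub>R u) e \<bullet> u)\<^sup>2) \<partial>\<mu>)
      \<le> ennreal K * indicator {0..h} s"
    proof (cases "s \<in> {0..h}")
      case True
      then have "s \<in> {0..1}" using h by simp
      with True show ?thesis using K(1) by simp
    qed simp
  qed
  also have "\<dots> = ennreal (K * h)"
    using h K by (simp add: nn_integral_cmult_indicator ennreal_mult)
  finally have "(\<integral>\<^sup>+ e. ennreal (?F e) \<partial>\<mu>) \<le> ennreal (K * h)" .
  from integrable_if_nn_integral_le[OF F_measurable _ this] h K(2)
  have F: "integrable \<mu> ?F" "integral\<^sup>L \<mu> ?F \<le> K * h"
    by simp_all
  have eq: "(\<lambda>e. ((G (x + h *\<^sub>R u) e - G x e) / h)\<^sup>2) = (\<lambda>e. ?F e / h)"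
    using h by (auto simp: fun_eq_iff power2_eq_square field_simps)
  show "integrable \<mu> (\<lambda>e. ((G (x + h *\<^sub>R u) e - G x e) / h)\<^sup>2)"
    unfolding eq by (rule integrable_divide[OF F(1)])
  show "(\<integral>e. ((G (x + h *\<^sub>R u) e - G x e) / h)\<^sup>2 \<partial>\<mu>) \<le> K"
    unfolding eq using F h by (simp add: divide_le_eq)
qed

lemma
  shows integrable_DG_inner_sq: "integrable \<mu> (\<lambda>e. (DG x e \<bullet> u)\<^sup>2)"
    and integrable_DG_inner: "integrable \<mu> (\<lambda>e. DG x e \<bullet> u)"
proof -
  show sq: "integrable \<mu> (\<lambda>e. (DG x e \<bullet> u)\<^sup>2)"
    using M_nonneg g_nonneg[of x]
    by (intro integrable_if_nn_integral_le(1)[OF _ _ nn_integral_DG_inner_sq_le]) auto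
  show "integrable \<mu> (\<lambda>e. DG x e \<bullet> u)"
    using sq by (rule square_integrable_imp_integrable[rotated]) simp
qed

text \<open>Differentiation under the expectation: the difference quotients of \<open>G\<close> converge pointwise and
  are bounded in \<open>L\<^sup>2\<close>, hence their expectations converge.\<close>
lemma integral_difference_quotient_tendsto:
  "(\<lambda>j. \<integral>e. (G (x + inverse (real (Suc j)) *\<^sub>R u) e - G x e) / inverse (real (Suc j)) \<partial>\<mu>)
    \<longlonglongrightarrow> (\<integral>e. DG x e \<bullet> u \<partial>\<mu>)"
proof -
  obtain K where K: "\<forall>s\<in>{0..1}. (\<integral>\<^sup>+ e. ennreal ((DG (x + s *\<^sub>R u) e \<bullet> u)\<^sup>2) \<partial>\<mu>) \<le> ennreal K"
    and "0 \<le> K"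
    using directional_second_moment_bounded by blast
  define h where "h j = inverse (real (Suc j))" for j
  define q where "q j e = (G (x + h j *\<^sub>R u) e - G x e) / h j" for j e
  define \<phi> where "\<phi> e = DG x e \<bullet> u" for e
  have "0 < h j" "h j \<le> 1" for j
    unfolding h_def by (auto simp: field_simps)
  from difference_quotient_second_moment[OF K \<open>0 \<le> K\<close> this]
  have q_sq: "integrable \<mu> (\<lambda>e. (q j e)\<^sup>2)" "(\<integral>e. (q j e)\<^sup>2 \<partial>\<mu>) \<le> K" for j
    by (auto simp: q_def)
  have q_int: "integrable \<mu> (q j)" for j
    unfolding q_def by (intro integrable_divide Bochner_Integration.integrable_diff G_integrable)
  have [measurable]: "q j \<in> borel_measurable \<mu>" "\<phi> \<in> borel_measurable \<mu>" for j
    unfolding q_def \<phi>_def by measurable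
  have \<phi>_int: "integrable \<mu> \<phi>" "integrable \<mu> (\<lambda>e. (\<phi> e)\<^sup>2)"
    unfolding \<phi>_def by (rule integrable_DG_inner integrable_DG_inner_sq)+
  have "(\<integral>\<^sup>+ e. ennreal ((\<phi> e)\<^sup>2) \<partial>\<mu>) \<le> ennreal K"
    using K[rule_format, of 0] by (simp add: \<phi>_def)
  then have \<phi>_sq: "(\<integral>e. (\<phi> e)\<^sup>2 \<partial>\<mu>) \<le> K"
    using integrable_if_nn_integral_le(2)[of "\<lambda>e. (\<phi> e)\<^sup>2"] \<open>0 \<le> K\<close> by simp
  have "(\<lambda>j. \<integral>e. q j e - \<phi> e \<partial>\<mu>) \<longlonglongrightarrow> 0"
  proof (rule integral_tendsto_zero_if_L2_bounded)
    fix e assume "e \<in> space \<mu>"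
    have "((\<lambda>t. G (x + t *\<^sub>R u) e) has_real_derivative (DG x e \<bullet> u)) (at 0)"
      using has_real_derivative_along_line[OF G_has_derivative[OF \<open>e \<in> space \<mu>\<close>], of x u 0] by simp
    from difference_quotient_tendsto[OF this] have "(\<lambda>j. q j e) \<longlonglongrightarrow> \<phi> e"
      by (simp add: q_def h_def \<phi>_def)
    then show "(\<lambda>j. q j e - \<phi> e) \<longlonglongrightarrow> 0"
      by (rule LIM_zero)
  next
    fix j
    have pointwise: "(q j e - \<phi> e)\<^sup>2 \<le> 2 * (q j e)\<^sup>2 + 2 * (\<phi> e)\<^sup>2" for e
      using norm_add_sq_le[of "q j e" "- \<phi> e"] by simp
    have bound_int: "integrable \<mu> (\<lambda>e. 2 * (q j e)\<^sup>2 + 2 * (\<phi> e)\<^sup>2)"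
      using q_sq \<phi>_int by simp
    show "integrable \<mu> (\<lambda>e. (q j e - \<phi> e)\<^sup>2)"
      by (rule Bochner_Integration.integrable_bound[OF bound_int]) (use pointwise in auto)
    then have "(\<integral>e. (q j e - \<phi> e)\<^sup>2 \<partial>\<mu>) \<le> (\<integral>e. 2 * (q j e)\<^sup>2 + 2 * (\<phi> e)\<^sup>2 \<partial>\<mu>)"
      using bound_int pointwise by (rule integral_mono)
    also have "\<dots> \<le> 4 * K"
      using q_sq[of j] \<phi>_int \<phi>_sq by simp
    finally show "(\<integral>e. (q j e - \<phi> e)\<^sup>2 \<partial>\<mu>) \<le> 4 * K" .
  qed (use q_int \<phi>_int in simp)
  then have "(\<lambda>j. \<integral>e. q j e \<partial>\<mu>) \<longlonglongrightarrow> (\<integral>e. \<phi> e \<partial>\<mu>)"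
    using q_int \<phi>_int by (simp add: LIM_zero_iff)
  then show ?thesis
    by (simp add: q_def h_def \<phi>_def)
qed

lemma integral_DG_inner: "(\<integral>e. DG x e \<bullet> u \<partial>\<mu>) = Dg x \<bullet> u"
proof -
  have "((\<lambda>t. g (x + t *\<^sub>R u)) has_real_derivative (Dg x \<bullet> u)) (at 0)"
    using has_real_derivative_along_line[OF g_has_derivative, of x u 0] by simp
  from difference_quotient_tendsto[OF this]
  have "(\<lambda>j. \<integral>e. (G (x + inverse (real (Suc j)) *\<^sub>R u) e - G x e) / inverse (real (Suc j)) \<partial>\<mu>)
      \<longlonglongrightarrow> Dg x \<bullet> u"
    using g_expectation G_integrable by (simp add: has_bochner_integral_iff)
  with integral_difference_quotient_tendsto show ?thesis
    by (rule LIMSEQ_unique)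
qed

lemma g_add_le: "g (z + w) \<le> (1 + c) * (g z + (norm w)\<^sup>2 / 2)"
proof -
  have "g (z + w) \<le> g z + Dg z \<bullet> w + c / 2 * (norm w)\<^sup>2"
    using g_upper_bound[of "z + w" z] by simp
  also have "Dg z \<bullet> w \<le> (norm (Dg z))\<^sup>2 / 2 + (norm w)\<^sup>2 / 2"
    using norm_cauchy_schwarz[of "Dg z" w] zero_le_power2[of "norm (Dg z) - norm w"]
    by (simp add: power2_eq_square algebra_simps)
  also have "(norm (Dg z))\<^sup>2 / 2 \<le> c * g z"
    using norm_gradient_sq_le_g[of z] by simp
  finally show ?thesis
    by (simp add: field_simps)
qed

end

section \<open>A Lyapunov function for the heavy-ball step\<close>

locale momentum_lyapunov = stochastic_gradient +
  fixes \<alpha> \<epsilon>_max :: real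
  assumes \<alpha>_nonneg: "0 \<le> \<alpha>" and \<alpha>_less_1: "\<alpha> < 1" and \<epsilon>_max_nonneg: "0 \<le> \<epsilon>_max"
begin

definition lookahead :: real where
  "lookahead = \<alpha> / (1 - \<alpha>)"

definition kinetic_weight :: real where
  "kinetic_weight = \<epsilon>_max * c\<^sup>2 * lookahead\<^sup>2 / (2 * (1 - \<alpha>)\<^sup>2) + 1"

definition noise_const :: real where
  "noise_const = (4 * c + 2 * M) * (1 + c) * (1 + lookahead\<^sup>2) + 2 * M"

definition growth_const :: real where
  "growth_const = (c / (2 * (1 - \<alpha>)\<^sup>2) + kinetic_weight / (1 - \<alpha>)) * noise_const"

definition lyapunov where
  "lyapunov \<theta> v = 2 * (g (\<theta> - lookahead *\<^sub>R v) + kinetic_weight * (norm v)\<^sup>2)"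

lemma lookahead_nonneg: "0 \<le> lookahead"
  using \<alpha>_nonneg \<alpha>_less_1 by (simp add: lookahead_def)

lemma kinetic_weight_ge_1: "1 \<le> kinetic_weight"
  using \<epsilon>_max_nonneg by (simp add: kinetic_weight_def)

lemma noise_const_nonneg: "0 \<le> noise_const"
  using c_pos M_nonneg by (simp add: noise_const_def)

lemma growth_const_nonneg: "0 \<le> growth_const"
  using c_pos \<alpha>_less_1 kinetic_weight_ge_1 noise_const_nonneg by (simp add: growth_const_def)

lemma lyapunov_nonneg: "0 \<le> lyapunov \<theta> v"
  using g_nonneg kinetic_weight_ge_1 by (simp add: lyapunov_def)

lemma integral_norm_DG_sq_le_lyapunov:
  "(\<integral>e. (norm (DG \<theta> e))\<^sup>2 \<partial>\<mu>)
    \<le> noise_const * (1 + g (\<theta> - lookahead *\<^sub>R v) + kinetic_weight * (norm v)\<^sup>2)"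
proof -
  define z where "z = \<theta> - lookahead *\<^sub>R v"
  have "g \<theta> \<le> (1 + c) * (g z + (lookahead * norm v)\<^sup>2 / 2)"
    using g_add_le[of z "lookahead *\<^sub>R v"] lookahead_nonneg by (simp add: z_def)
  also have "\<dots> \<le> (1 + c) * (1 + lookahead\<^sup>2) * (g z + (norm v)\<^sup>2)"
    using c_pos g_nonneg[of z]
    by (simp add: power_mult_distrib algebra_simps mult_left_mono mult_right_mono add_mono)
  finally have g_shift: "g \<theta> \<le> (1 + c) * (1 + lookahead\<^sup>2) * (g z + (norm v)\<^sup>2)" .
  have "(\<integral>e. (norm (DG \<theta> e))\<^sup>2 \<partial>\<mu>) \<le> 2 * (norm (Dg \<theta>))\<^sup>2 + 2 * M * (1 + g \<theta>)"
    by (rule integral_norm_DG_sq_le)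
  also have "\<dots> \<le> (4 * c + 2 * M) * g \<theta> + 2 * M"
    using norm_gradient_sq_le_g[of \<theta>] by (simp add: algebra_simps)
  also have "\<dots> \<le> (4 * c + 2 * M) * ((1 + c) * (1 + lookahead\<^sup>2) * (g z + (norm v)\<^sup>2)) + 2 * M"
    using g_shift c_pos M_nonneg by (simp add: mult_left_mono)
  also have "\<dots> \<le> noise_const * (1 + g z + kinetic_weight * (norm v)\<^sup>2)"
  proof -
    define a where "a = (4 * c + 2 * M) * (1 + c) * (1 + lookahead\<^sup>2)"
    have "0 \<le> a"
      using c_pos M_nonneg by (simp add: a_def)
    have "(norm v)\<^sup>2 \<le> kinetic_weight * (norm v)\<^sup>2"
      using kinetic_weight_ge_1 by (simp add: mult_le_cancel_right1)
    then have "a * (g z + (norm v)\<^sup>2) + 2 * M \<le> a * (g z + kinetic_weight * (norm v)\<^sup>2) + 2 * M"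
      using \<open>0 \<le> a\<close> by (simp add: mult_left_mono)
    also have "\<dots> \<le> (a + 2 * M) * (1 + g z + kinetic_weight * (norm v)\<^sup>2)"
      using \<open>0 \<le> a\<close> M_nonneg g_nonneg[of z] kinetic_weight_ge_1
        mult_nonneg_nonneg[OF M_nonneg g_nonneg[of z]]
        mult_nonneg_nonneg[OF M_nonneg mult_nonneg_nonneg[of kinetic_weight "(norm v)\<^sup>2"]]
      by (simp add: algebra_simps)
    finally show ?thesis
      by (simp add: a_def noise_const_def mult.assoc)
  qed
  finally show ?thesis by (simp add: z_def)
qed

lemma lyapunov_momentum_step_le:
  assumes "0 \<le> \<epsilon>"
  shows "lyapunov (\<theta> - (\<alpha> *\<^sub>R v + \<epsilon> *\<^sub>R d)) (\<alpha> *\<^sub>R v + \<epsilon> *\<^sub>R d)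
    \<le> 2 * (g (\<theta> - lookahead *\<^sub>R v) - \<epsilon> / (1 - \<alpha>) * (d \<bullet> Dg (\<theta> - lookahead *\<^sub>R v))
        + c / 2 * (\<epsilon> / (1 - \<alpha>))\<^sup>2 * (norm d)\<^sup>2
        + kinetic_weight * (\<alpha> * (norm v)\<^sup>2 + \<epsilon>\<^sup>2 / (1 - \<alpha>) * (norm d)\<^sup>2))"
proof -
  define z where "z = \<theta> - lookahead *\<^sub>R v"
  define \<eta> where "\<eta> = \<epsilon> / (1 - \<alpha>)"
  let ?v' = "\<alpha> *\<^sub>R v + \<epsilon> *\<^sub>R d"
  have "(1 + lookahead) * \<alpha> = lookahead" "(1 + lookahead) * \<epsilon> = \<eta>"
    using \<alpha>_less_1 by (simp_all add: lookahead_def \<eta>_def field_simps)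
  then have shifted: "\<theta> - ?v' - lookahead *\<^sub>R ?v' = z - \<eta> *\<^sub>R d"
    by (simp add: z_def algebra_simps flip: scaleR_add_left)
  have "g (z - \<eta> *\<^sub>R d) \<le> g z - \<eta> * (d \<bullet> Dg z) + c / 2 * \<eta>\<^sup>2 * (norm d)\<^sup>2"
    using g_upper_bound[of "z - \<eta> *\<^sub>R d" z] by (simp add: inner_commute power_mult_distrib)
  moreover have "(norm ?v')\<^sup>2 \<le> \<alpha> * (norm v)\<^sup>2 + \<epsilon>\<^sup>2 / (1 - \<alpha>) * (norm d)\<^sup>2"
    using \<alpha>_nonneg \<alpha>_less_1 assms by (rule norm_momentum_sq_le)
  then have "kinetic_weight * (norm ?v')\<^sup>2
      \<le> kinetic_weight * (\<alpha> * (norm v)\<^sup>2 + \<epsilon>\<^sup>2 / (1 - \<alpha>) * (norm d)\<^sup>2)"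
    using kinetic_weight_ge_1 by (intro mult_left_mono) auto
  ultimately show ?thesis
    unfolding lyapunov_def shifted by (simp add: z_def \<eta>_def)
qed

text \<open>The choice of \<open>kinetic_weight\<close> makes the kinetic energy, which decays by the factor \<open>\<alpha>\<close>,
  absorb the error \<open>c\<^sup>2 lookahead\<^sup>2 |v|\<^sup>2\<close> of evaluating the gradient at \<open>\<theta>\<close> instead of the shifted point.\<close>
lemma momentum_drift_le:
  assumes \<epsilon>: "0 \<le> \<epsilon>" "\<epsilon> \<le> \<epsilon>_max"
  shows "\<epsilon> * (norm (Dg \<theta>))\<^sup>2 + 2 * kinetic_weight * \<alpha> * (norm v)\<^sup>2
    \<le> 2 * kinetic_weight * (norm v)\<^sup>2 + 2 * (\<epsilon> / (1 - \<alpha>)) * (Dg \<theta> \<bullet> Dg (\<theta> - lookahead *\<^sub>R v))"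
proof -
  define \<eta> where "\<eta> = \<epsilon> / (1 - \<alpha>)"
  have "0 < 1 - \<alpha>" "\<alpha> \<noteq> 1"
    using \<alpha>_less_1 by simp_all
  have "(norm (Dg \<theta>))\<^sup>2 / 2 - c\<^sup>2 * lookahead\<^sup>2 * (norm v)\<^sup>2 / 2 \<le> Dg \<theta> \<bullet> Dg (\<theta> - lookahead *\<^sub>R v)"
    using inner_lipschitz_ge[of Dg \<theta> "\<theta> - lookahead *\<^sub>R v" c, OF Dg_lipschitz] lookahead_nonneg
    by (simp add: power_mult_distrib)
  moreover have "0 \<le> 2 * \<eta>"
    using \<epsilon> \<open>0 < 1 - \<alpha>\<close> by (simp add: \<eta>_def)
  ultimately have "\<eta> * (norm (Dg \<theta>))\<^sup>2 - \<eta> * c\<^sup>2 * lookahead\<^sup>2 * (norm v)\<^sup>2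
      \<le> 2 * \<eta> * (Dg \<theta> \<bullet> Dg (\<theta> - lookahead *\<^sub>R v))"
    by (auto dest: mult_left_mono simp: field_simps)
  moreover have "\<epsilon> * (norm (Dg \<theta>))\<^sup>2 \<le> \<eta> * (norm (Dg \<theta>))\<^sup>2"
    using \<open>0 < 1 - \<alpha>\<close> mult_nonneg_nonneg[OF \<epsilon>(1) \<alpha>_nonneg]
    by (intro mult_right_mono) (auto simp: \<eta>_def le_divide_eq algebra_simps)
  moreover have "\<eta> * c\<^sup>2 * lookahead\<^sup>2 * (norm v)\<^sup>2 \<le> 2 * (kinetic_weight - 1) * (1 - \<alpha>) * (norm v)\<^sup>2"
  proof (rule mult_right_mono)
    have "\<eta> \<le> \<epsilon>_max / (1 - \<alpha>)"
      using \<epsilon> \<open>0 < 1 - \<alpha>\<close> by (simp add: \<eta>_def divide_right_mono)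
    then have "\<eta> * (c\<^sup>2 * lookahead\<^sup>2) \<le> \<epsilon>_max / (1 - \<alpha>) * (c\<^sup>2 * lookahead\<^sup>2)"
      by (rule mult_right_mono) simp
    also have "\<dots> = 2 * (kinetic_weight - 1) * (1 - \<alpha>)"
    proof -
      have "\<epsilon>_max / w * (c\<^sup>2 * lookahead\<^sup>2) = 2 * (\<epsilon>_max * c\<^sup>2 * lookahead\<^sup>2 / (2 * w\<^sup>2)) * w"
        if "w \<noteq> 0" for w :: real
        using that by (simp add: power2_eq_square field_simps)
      from this[of "1 - \<alpha>"] show ?thesis
        using \<open>\<alpha> \<noteq> 1\<close> by (simp add: kinetic_weight_def)
    qed
    finally show "\<eta> * c\<^sup>2 * lookahead\<^sup>2 \<le> 2 * (kinetic_weight - 1) * (1 - \<alpha>)"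
      by (simp add: mult.assoc)
  qed simp
  moreover have "0 \<le> (1 - \<alpha>) * (norm v)\<^sup>2"
    using \<open>0 < 1 - \<alpha>\<close> by simp
  ultimately show ?thesis
    by (simp add: \<eta>_def algebra_simps)
qed

lemma momentum_noise_le:
  "2 * (c / 2 * (\<epsilon> / (1 - \<alpha>))\<^sup>2 + kinetic_weight * \<epsilon>\<^sup>2 / (1 - \<alpha>)) * (\<integral>e. (norm (DG \<theta> e))\<^sup>2 \<partial>\<mu>)
    \<le> growth_const * \<epsilon>\<^sup>2 * lyapunov \<theta> v + 2 * growth_const * \<epsilon>\<^sup>2"
proof -
  define w where "w = c / (2 * (1 - \<alpha>)\<^sup>2) + kinetic_weight / (1 - \<alpha>)"
  have "0 \<le> w"
    using c_pos \<alpha>_less_1 kinetic_weight_ge_1 by (simp add: w_def)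
  have "c / 2 * (\<epsilon> / w')\<^sup>2 + kinetic_weight * \<epsilon>\<^sup>2 / w'
      = \<epsilon>\<^sup>2 * (c / (2 * w'\<^sup>2) + kinetic_weight / w')" if "w' \<noteq> 0" for w' :: real
    using that by (simp add: power2_eq_square field_simps)
  from this[of "1 - \<alpha>"] \<alpha>_less_1
  have "2 * (c / 2 * (\<epsilon> / (1 - \<alpha>))\<^sup>2 + kinetic_weight * \<epsilon>\<^sup>2 / (1 - \<alpha>)) * (\<integral>e. (norm (DG \<theta> e))\<^sup>2 \<partial>\<mu>)
      = 2 * \<epsilon>\<^sup>2 * w * (\<integral>e. (norm (DG \<theta> e))\<^sup>2 \<partial>\<mu>)"
    by (simp add: w_def)
  also have "\<dots> \<le> 2 * \<epsilon>\<^sup>2 * w * (noise_const * (1 + g (\<theta> - lookahead *\<^sub>R v) + kinetic_weight * (norm v)\<^sup>2))"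
    using integral_norm_DG_sq_le_lyapunov \<open>0 \<le> w\<close> by (intro mult_left_mono) auto
  also have "\<dots> = growth_const * \<epsilon>\<^sup>2 * lyapunov \<theta> v + 2 * growth_const * \<epsilon>\<^sup>2"
    by (simp add: growth_const_def lyapunov_def w_def algebra_simps)
  finally show ?thesis .
qed

lemma expected_lyapunov_step:
  assumes \<epsilon>: "0 < \<epsilon>" "\<epsilon> \<le> \<epsilon>_max"
  shows "(\<integral>\<^sup>+e. ennreal (lyapunov (\<theta> - (\<alpha> *\<^sub>R v + \<epsilon> *\<^sub>R DG \<theta> e)) (\<alpha> *\<^sub>R v + \<epsilon> *\<^sub>R DG \<theta> e)) \<partial>\<mu>)
          + ennreal (\<epsilon> * (norm (Dg \<theta>))\<^sup>2)
       \<le> ennreal ((1 + growth_const * \<epsilon>\<^sup>2) * lyapunov \<theta> v + 2 * growth_const * \<epsilon>\<^sup>2)"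
proof -
  let ?v' = "\<lambda>e. \<alpha> *\<^sub>R v + \<epsilon> *\<^sub>R DG \<theta> e" and ?z = "\<theta> - lookahead *\<^sub>R v"
  define U where "U e = 2 * (g ?z - \<epsilon> / (1 - \<alpha>) * (DG \<theta> e \<bullet> Dg ?z)
      + c / 2 * (\<epsilon> / (1 - \<alpha>))\<^sup>2 * (norm (DG \<theta> e))\<^sup>2
      + kinetic_weight * (\<alpha> * (norm v)\<^sup>2 + \<epsilon>\<^sup>2 / (1 - \<alpha>) * (norm (DG \<theta> e))\<^sup>2))" for e
  have U_ge: "lyapunov (\<theta> - ?v' e) (?v' e) \<le> U e" for e
    unfolding U_def using \<epsilon> by (intro lyapunov_momentum_step_le) simp
  have U_nonneg: "0 \<le> U e" for e
    using U_ge[of e] lyapunov_nonneg[of "\<theta> - ?v' e" "?v' e"] by simp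
  have U_integrable: "integrable \<mu> U"
    unfolding U_def using integrable_norm_DG_sq integrable_DG_inner by simp
  have "(\<integral>e. U e \<partial>\<mu>) = 2 * g ?z - 2 * (\<epsilon> / (1 - \<alpha>)) * (Dg \<theta> \<bullet> Dg ?z)
      + 2 * (c / 2 * (\<epsilon> / (1 - \<alpha>))\<^sup>2 + kinetic_weight * \<epsilon>\<^sup>2 / (1 - \<alpha>)) * (\<integral>e. (norm (DG \<theta> e))\<^sup>2 \<partial>\<mu>)
      + 2 * kinetic_weight * \<alpha> * (norm v)\<^sup>2"
    unfolding U_def using integrable_norm_DG_sq integrable_DG_inner integral_DG_inner
    by (simp add: prob_space algebra_simps)
  then have total: "(\<integral>e. U e \<partial>\<mu>) + \<epsilon> * (norm (Dg \<theta>))\<^sup>2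
      \<le> (1 + growth_const * \<epsilon>\<^sup>2) * lyapunov \<theta> v + 2 * growth_const * \<epsilon>\<^sup>2"
    using momentum_drift_le[OF less_imp_le[OF \<epsilon>(1)] \<epsilon>(2), of \<theta> v] momentum_noise_le[of \<epsilon> \<theta> v]
    by (simp add: lyapunov_def algebra_simps)
  have "(\<integral>\<^sup>+e. ennreal (lyapunov (\<theta> - ?v' e) (?v' e)) \<partial>\<mu>) \<le> (\<integral>\<^sup>+e. ennreal (U e) \<partial>\<mu>)"
    by (intro nn_integral_mono ennreal_leI U_ge)
  also have "\<dots> = ennreal (\<integral>e. U e \<partial>\<mu>)"
    by (rule nn_integral_eq_integral[OF U_integrable]) (simp add: U_nonneg)
  finally have "(\<integral>\<^sup>+e. ennreal (lyapunov (\<theta> - ?v' e) (?v' e)) \<partial>\<mu>) + ennreal (\<epsilon> * (norm (Dg \<theta>))\<^sup>2)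
      \<le> ennreal (\<integral>e. U e \<partial>\<mu>) + ennreal (\<epsilon> * (norm (Dg \<theta>))\<^sup>2)"
    by (rule add_right_mono)
  also have "\<dots> = ennreal ((\<integral>e. U e \<partial>\<mu>) + \<epsilon> * (norm (Dg \<theta>))\<^sup>2)"
    using \<epsilon> U_nonneg by (simp add: ennreal_plus integral_nonneg)
  also have "\<dots> \<le> ennreal ((1 + growth_const * \<epsilon>\<^sup>2) * lyapunov \<theta> v + 2 * growth_const * \<epsilon>\<^sup>2)"
    by (rule ennreal_leI[OF total])
  finally show ?thesis .
qed

end

section \<open>The momentum iteration\<close>

lemma sgdm_state_Suc_eq:
  "sgdm_state \<alpha> \<epsilon> DG \<xi> \<theta>1 v0 (Suc k) \<omega> =
    (fst (sgdm_state \<alpha> \<epsilon> DG \<xi> \<theta>1 v0 k \<omega>) -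
       (\<alpha> *\<^sub>R snd (sgdm_state \<alpha> \<epsilon> DG \<xi> \<theta>1 v0 k \<omega>)
        + \<epsilon> (Suc k) *\<^sub>R DG (fst (sgdm_state \<alpha> \<epsilon> DG \<xi> \<theta>1 v0 k \<omega>)) (\<xi> (Suc k) \<omega>)),
     \<alpha> *\<^sub>R snd (sgdm_state \<alpha> \<epsilon> DG \<xi> \<theta>1 v0 k \<omega>)
       + \<epsilon> (Suc k) *\<^sub>R DG (fst (sgdm_state \<alpha> \<epsilon> DG \<xi> \<theta>1 v0 k \<omega>)) (\<xi> (Suc k) \<omega>))"
  by (simp add: Let_def split: prod.split)

lemma sgdm_state_restrict:
  "k \<le> K \<Longrightarrow> sgdm_state \<alpha> \<epsilon> DG \<xi> \<theta>1 v0 k \<omega> =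
     sgdm_state \<alpha> \<epsilon> DG (\<lambda>i f. f i) \<theta>1 v0 k (restrict (\<lambda>i. \<xi> i \<omega>) {1..K})"
  by (induction k) (auto simp: sgdm_state_Suc_eq)

lemma measurable_sgdm_state:
  fixes DG :: "'a::euclidean_space \<Rightarrow> 'b \<Rightarrow> 'a"
  assumes DG: "(\<lambda>(x, e). DG x e) \<in> borel_measurable (borel \<Otimes>\<^sub>M E)"
  shows "(\<And>i. i \<in> {1..k} \<Longrightarrow> \<xi> i \<in> measurable N E) \<Longrightarrow>
    (\<lambda>\<omega>. fst (sgdm_state \<alpha> \<epsilon> DG \<xi> \<theta>1 v0 k \<omega>)) \<in> borel_measurable N \<and>
    (\<lambda>\<omega>. snd (sgdm_state \<alpha> \<epsilon> DG \<xi> \<theta>1 v0 k \<omega>)) \<in> borel_measurable N"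
proof (induction k)
  case (Suc k)
  then have state: "(\<lambda>\<omega>. fst (sgdm_state \<alpha> \<epsilon> DG \<xi> \<theta>1 v0 k \<omega>)) \<in> borel_measurable N"
      "(\<lambda>\<omega>. snd (sgdm_state \<alpha> \<epsilon> DG \<xi> \<theta>1 v0 k \<omega>)) \<in> borel_measurable N"
    by auto
  have "(\<lambda>\<omega>. DG (fst (sgdm_state \<alpha> \<epsilon> DG \<xi> \<theta>1 v0 k \<omega>)) (\<xi> (Suc k) \<omega>)) \<in> borel_measurable N"
    using Suc.prems by (intro measurable_Pair_compose_split[OF DG state(1)]) auto
  then show ?case
    unfolding sgdm_state_Suc_eq using state by simp
qed simp

lemma measurable_sgdm_theta:
  fixes DG :: "'a::euclidean_space \<Rightarrow> 'b \<Rightarrow> 'a"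
  assumes "(\<lambda>(x, e). DG x e) \<in> borel_measurable (borel \<Otimes>\<^sub>M E)" "\<And>i. \<xi> i \<in> measurable N E"
  shows "(\<lambda>\<omega>. sgdm_theta \<alpha> \<epsilon> DG \<xi> \<theta>1 v0 t \<omega>) \<in> borel_measurable N"
  unfolding sgdm_theta_def using measurable_sgdm_state[OF assms(1), of "t - 1" \<xi> N] assms(2) by blast

lemma (in prob_space) nn_integral_indep_var:
  assumes ind: "indep_var M1 X M2 Y" and f: "f \<in> measurable M2 N"
    and h: "h \<in> borel_measurable (M1 \<Otimes>\<^sub>M N)"
  shows "(\<integral>\<^sup>+\<omega>. h (X \<omega>, f (Y \<omega>)) \<partial>M) = (\<integral>\<^sup>+\<omega>. (\<integral>\<^sup>+z. h (X \<omega>, z) \<partial>distr M N (\<lambda>\<omega>. f (Y \<omega>))) \<partial>M)"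
    and "(\<lambda>\<omega>. \<integral>\<^sup>+z. h (X \<omega>, z) \<partial>distr M N (\<lambda>\<omega>. f (Y \<omega>))) \<in> borel_measurable M"
proof -
  have X[measurable]: "X \<in> measurable M M1" and Y[measurable]: "Y \<in> measurable M M2"
    using indep_var_rv1[OF ind] indep_var_rv2[OF ind] by auto
  note [measurable] = f h
  interpret Y: prob_space "distr M M2 Y" by (rule prob_space_distr[OF Y])
  interpret Z: prob_space "distr M N (\<lambda>\<omega>. f (Y \<omega>))" by (rule prob_space_distr) measurable
  have "h \<in> borel_measurable (M1 \<Otimes>\<^sub>M distr M N (\<lambda>\<omega>. f (Y \<omega>)))"
    by (subst measurable_cong_sets[OF sets_pair_measure_cong[OF refl sets_distr] refl]) (rule h)
  then have inner: "(\<lambda>x. \<integral>\<^sup>+z. h (x, z) \<partial>distr M N (\<lambda>\<omega>. f (Y \<omega>))) \<in> borel_measurable M1"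
    by (rule Z.borel_measurable_nn_integral_fst)
  show "(\<lambda>\<omega>. \<integral>\<^sup>+z. h (X \<omega>, z) \<partial>distr M N (\<lambda>\<omega>. f (Y \<omega>))) \<in> borel_measurable M"
    using measurable_compose[OF X inner] by simp
  have h': "(\<lambda>p. h (fst p, f (snd p))) \<in> borel_measurable (distr M M1 X \<Otimes>\<^sub>M distr M M2 Y)"
    by (subst measurable_cong_sets[OF sets_pair_measure_cong[OF sets_distr sets_distr] refl]) measurable
  have "distr M M1 X \<Otimes>\<^sub>M distr M M2 Y = distr M (M1 \<Otimes>\<^sub>M M2) (\<lambda>\<omega>. (X \<omega>, Y \<omega>))"
    using ind indep_var_distribution_eq by blast
  then have "(\<integral>\<^sup>+\<omega>. h (X \<omega>, f (Y \<omega>)) \<partial>M) = (\<integral>\<^sup>+p. h (fst p, f (snd p)) \<partial>(distr M M1 X \<Otimes>\<^sub>M distr M M2 Y))"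
    by (simp add: nn_integral_distr)
  also have "\<dots> = (\<integral>\<^sup>+x. \<integral>\<^sup>+y. h (x, f y) \<partial>distr M M2 Y \<partial>distr M M1 X)"
    using Y.nn_integral_fst[OF h'] by simp
  also have "\<dots> = (\<integral>\<^sup>+x. \<integral>\<^sup>+z. h (x, z) \<partial>distr M N (\<lambda>\<omega>. f (Y \<omega>)) \<partial>distr M M1 X)"
    by (intro nn_integral_cong) (simp add: nn_integral_distr)
  also have "\<dots> = (\<integral>\<^sup>+\<omega>. (\<integral>\<^sup>+z. h (X \<omega>, z) \<partial>distr M N (\<lambda>\<omega>. f (Y \<omega>))) \<partial>M)"
    using inner by (simp add: nn_integral_distr)
  finally show "(\<integral>\<^sup>+\<omega>. h (X \<omega>, f (Y \<omega>)) \<partial>M) = (\<integral>\<^sup>+\<omega>. (\<integral>\<^sup>+z. h (X \<omega>, z) \<partial>distr M N (\<lambda>\<omega>. f (Y \<omega>))) \<partial>M)" .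
qed

lemma sgdm_state_Suc_nn_integral:
  fixes DG :: "'a::euclidean_space \<Rightarrow> 'b \<Rightarrow> 'a" and \<theta>1 v0 :: 'a and \<alpha> :: real
    and \<epsilon> :: "nat \<Rightarrow> real" and k :: nat and F :: "'a \<Rightarrow> 'a \<Rightarrow> ennreal"
  assumes P: "prob_space P"
    and \<xi>_indep: "prob_space.indep_vars P (\<lambda>_. E) \<xi> {1..}"
    and DG_measurable: "(\<lambda>(x, e). DG x e) \<in> borel_measurable (borel \<Otimes>\<^sub>M E)"
    and F_measurable: "(\<lambda>(x, y). F x y) \<in> borel_measurable (borel \<Otimes>\<^sub>M borel)"
  defines "S \<equiv> sgdm_state \<alpha> \<epsilon> DG \<xi> \<theta>1 v0"
    and "V \<equiv> \<lambda>\<omega> e. \<alpha> *\<^sub>R snd (sgdm_state \<alpha> \<epsilon> DG \<xi> \<theta>1 v0 k \<omega>)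
      + \<epsilon> (Suc k) *\<^sub>R DG (fst (sgdm_state \<alpha> \<epsilon> DG \<xi> \<theta>1 v0 k \<omega>)) e"
  shows "(\<integral>\<^sup>+\<omega>. F (fst (S (Suc k) \<omega>)) (snd (S (Suc k) \<omega>)) \<partial>P)
      = (\<integral>\<^sup>+\<omega>. (\<integral>\<^sup>+e. F (fst (S k \<omega>) - V \<omega> e) (V \<omega> e) \<partial>distr P E (\<xi> (Suc k))) \<partial>P)"
    and "(\<lambda>\<omega>. \<integral>\<^sup>+e. F (fst (S k \<omega>) - V \<omega> e) (V \<omega> e) \<partial>distr P E (\<xi> (Suc k))) \<in> borel_measurable P"
proof -
  interpret prob_space P by (rule P)
  let ?M1 = "PiM {1..k} (\<lambda>_. E)"
  let ?R = "\<lambda>\<omega>. restrict (\<lambda>i. \<xi> i \<omega>) {1..k}"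
  let ?S = "sgdm_state \<alpha> \<epsilon> DG (\<lambda>i f. f i) \<theta>1 v0 k"
  define H where "H p = F (fst (?S (fst p)) - (\<alpha> *\<^sub>R snd (?S (fst p)) + \<epsilon> (Suc k) *\<^sub>R DG (fst (?S (fst p))) (snd p)))
      (\<alpha> *\<^sub>R snd (?S (fst p)) + \<epsilon> (Suc k) *\<^sub>R DG (fst (?S (fst p))) (snd p))" for p
  have S_k: "S k \<omega> = ?S (?R \<omega>)" for \<omega>
    unfolding S_def by (rule sgdm_state_restrict) simp
  \<comment> \<open>the first \<open>k\<close> samples, which determine the current state, are independent of the next one\<close>
  have indep: "indep_var ?M1 ?R (PiM {Suc k} (\<lambda>_. E)) (\<lambda>\<omega>. restrict (\<lambda>i. \<xi> i \<omega>) {Suc k})"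
    by (rule indep_var_restrict[OF \<xi>_indep]) auto
  have component: "(\<lambda>f. f (Suc k)) \<in> measurable (PiM {Suc k} (\<lambda>_. E)) E"
    by (rule measurable_component_singleton) simp
  have [measurable]: "(\<lambda>f. fst (?S f)) \<in> borel_measurable ?M1" "(\<lambda>f. snd (?S f)) \<in> borel_measurable ?M1"
    using measurable_sgdm_state[OF DG_measurable, of k "\<lambda>i f. f i" ?M1] by auto
  note [measurable] = DG_measurable F_measurable
  have H_measurable: "H \<in> borel_measurable (?M1 \<Otimes>\<^sub>M E)"
    unfolding H_def by measurable
  have "F (fst (S (Suc k) \<omega>)) (snd (S (Suc k) \<omega>)) = H (?R \<omega>, \<xi> (Suc k) \<omega>)" for \<omega>
    using S_k[of \<omega>] unfolding H_def S_def by (simp del: sgdm_state.simps add: sgdm_state_Suc_eq)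
  moreover have "H (?R \<omega>, e) = F (fst (S k \<omega>) - V \<omega> e) (V \<omega> e)" for \<omega> e
    by (simp add: H_def V_def S_k S_k[unfolded S_def])
  ultimately show "(\<integral>\<^sup>+\<omega>. F (fst (S (Suc k) \<omega>)) (snd (S (Suc k) \<omega>)) \<partial>P)
      = (\<integral>\<^sup>+\<omega>. (\<integral>\<^sup>+e. F (fst (S k \<omega>) - V \<omega> e) (V \<omega> e) \<partial>distr P E (\<xi> (Suc k))) \<partial>P)"
    and "(\<lambda>\<omega>. \<integral>\<^sup>+e. F (fst (S k \<omega>) - V \<omega> e) (V \<omega> e) \<partial>distr P E (\<xi> (Suc k))) \<in> borel_measurable P"
    using nn_integral_indep_var[OF indep component H_measurable] by simp_all
qed

lemma sgdm_lyapunov_step: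
  fixes DG :: "'a::euclidean_space \<Rightarrow> 'b \<Rightarrow> 'a" and \<theta>1 v0 :: 'a
  assumes P: "prob_space P"
    and \<xi>_measurable: "\<And>n. \<xi> n \<in> measurable P E"
    and \<xi>_indep: "prob_space.indep_vars P (\<lambda>_. E) \<xi> {1..}"
    and DG_measurable: "(\<lambda>(x, e). DG x e) \<in> borel_measurable (borel \<Otimes>\<^sub>M E)"
    and L: "momentum_lyapunov (distr P E (\<xi> (Suc k))) g Dg G DG c M \<alpha> \<epsilon>_max"
    and \<epsilon>: "0 < \<epsilon> (Suc k)" "\<epsilon> (Suc k) \<le> \<epsilon>_max"
  defines "\<Phi> \<equiv> momentum_lyapunov.lyapunov g c \<alpha> \<epsilon>_max"
    and "C \<equiv> momentum_lyapunov.growth_const c M \<alpha> \<epsilon>_max"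
    and "S \<equiv> sgdm_state \<alpha> \<epsilon> DG \<xi> \<theta>1 v0"
  shows "(\<integral>\<^sup>+\<omega>. ennreal (\<Phi> (fst (S (Suc k) \<omega>)) (snd (S (Suc k) \<omega>))) \<partial>P)
       + ennreal (\<epsilon> (Suc k)) * (\<integral>\<^sup>+\<omega>. ennreal ((norm (Dg (fst (S k \<omega>))))\<^sup>2) \<partial>P)
     \<le> ennreal (1 + C * (\<epsilon> (Suc k))\<^sup>2) * (\<integral>\<^sup>+\<omega>. ennreal (\<Phi> (fst (S k \<omega>)) (snd (S k \<omega>))) \<partial>P)
       + ennreal (2 * C * (\<epsilon> (Suc k))\<^sup>2)"
proof -
  interpret prob_space P by (rule P)
  interpret L: momentum_lyapunov "distr P E (\<xi> (Suc k))" g Dg G DG c M \<alpha> \<epsilon>_max by (rule L)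
  let ?e = "\<epsilon> (Suc k)"
  let ?V = "\<lambda>\<omega> e. \<alpha> *\<^sub>R snd (S k \<omega>) + ?e *\<^sub>R DG (fst (S k \<omega>)) e"
  let ?next = "\<lambda>\<omega>. \<integral>\<^sup>+e. ennreal (\<Phi> (fst (S k \<omega>) - ?V \<omega> e) (?V \<omega> e)) \<partial>distr P E (\<xi> (Suc k))"
  have "(\<lambda>(x, y). ennreal (\<Phi> x y)) \<in> borel_measurable (borel \<Otimes>\<^sub>M borel)"
    unfolding \<Phi>_def L.lyapunov_def by measurable
  note next_state = sgdm_state_Suc_nn_integral[where \<alpha> = \<alpha> and \<epsilon> = \<epsilon> and ?\<theta>1.0 = \<theta>1
      and ?v0.0 = v0 and k = k, OF P \<xi>_indep DG_measurable this, folded S_def]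
  note [measurable] = measurable_sgdm_state[OF DG_measurable, of k \<xi> P, THEN conjunct1]
    measurable_sgdm_state[OF DG_measurable, of k \<xi> P, THEN conjunct2] \<xi>_measurable L.Dg_measurable
  have "(\<integral>\<^sup>+\<omega>. ennreal (\<Phi> (fst (S (Suc k) \<omega>)) (snd (S (Suc k) \<omega>))) \<partial>P)
       + ennreal ?e * (\<integral>\<^sup>+\<omega>. ennreal ((norm (Dg (fst (S k \<omega>))))\<^sup>2) \<partial>P)
     = (\<integral>\<^sup>+\<omega>. ?next \<omega> + ennreal (?e * (norm (Dg (fst (S k \<omega>))))\<^sup>2) \<partial>P)"
    using \<epsilon> next_state by (simp add: S_def nn_integral_add nn_integral_cmult[symmetric] ennreal_mult)
  also have "\<dots> \<le> (\<integral>\<^sup>+\<omega>. ennreal ((1 + C * ?e\<^sup>2) * \<Phi> (fst (S k \<omega>)) (snd (S k \<omega>)) + 2 * C * ?e\<^sup>2) \<partial>P)"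
    unfolding \<Phi>_def C_def by (intro nn_integral_mono L.expected_lyapunov_step \<epsilon>)
  also have "\<dots> = ennreal (1 + C * ?e\<^sup>2) * (\<integral>\<^sup>+\<omega>. ennreal (\<Phi> (fst (S k \<omega>)) (snd (S k \<omega>))) \<partial>P)
       + ennreal (2 * C * ?e\<^sup>2)"
    using L.growth_const_nonneg L.lyapunov_nonneg
    by (simp add: \<Phi>_def C_def S_def L.lyapunov_def ennreal_plus ennreal_mult nn_integral_add
        nn_integral_cmult emeasure_space_1)
  finally show ?thesis .
qed

section \<open>Summing the one-step inequality\<close>

lemma perturbed_descent_le_prod:
  fixes \<Psi> x :: "nat \<Rightarrow> ennreal" and b d :: "nat \<Rightarrow> real"
  assumes step: "\<And>k. \<Psi> (Suc k) + x (Suc k) \<le> ennreal (1 + b (Suc k)) * \<Psi> k + ennreal (d (Suc k))"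
    and b: "\<And>k. 0 \<le> b k" and d: "\<And>k. 0 \<le> d k"
  shows "\<Psi> n + (\<Sum>t=1..n. x t) \<le> ennreal (\<Prod>j=1..n. 1 + b j) * (\<Psi> 0 + ennreal (\<Sum>j=1..n. d j))"
proof (induction n)
  case (Suc n)
  let ?p = "\<Prod>j=1..n. 1 + b j" and ?s = "\<Sum>j=1..n. d j"
  have "1 \<le> ?p"
    using b by (intro prod_ge_1) (simp add: add_increasing2)
  have "1 \<le> ennreal (1 + b (Suc n))"
    using b[of "Suc n"] by simp
  have "\<Psi> (Suc n) + (\<Sum>t=1..Suc n. x t) = (\<Psi> (Suc n) + x (Suc n)) + (\<Sum>t=1..n. x t)"
    by (simp add: ac_simps)
  also have "\<dots> \<le> ennreal (1 + b (Suc n)) * \<Psi> n + ennreal (d (Suc n)) + (\<Sum>t=1..n. x t)"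
    by (intro add_right_mono step)
  also have "\<dots> \<le> ennreal (1 + b (Suc n)) * (\<Psi> n + (\<Sum>t=1..n. x t)) + ennreal (d (Suc n))"
    using mult_right_mono[OF \<open>1 \<le> ennreal (1 + b (Suc n))\<close>, of "\<Sum>t=1..n. x t"]
    by (simp add: distrib_left add_ac add_left_mono)
  also have "\<dots> \<le> ennreal (1 + b (Suc n)) * (ennreal ?p * (\<Psi> 0 + ennreal ?s)) + ennreal (d (Suc n))"
    by (intro add_right_mono mult_left_mono Suc.IH) auto
  also have "\<dots> \<le> ennreal (1 + b (Suc n)) * (ennreal ?p * (\<Psi> 0 + ennreal ?s))
      + ennreal ((1 + b (Suc n)) * ?p) * ennreal (d (Suc n))"
  proof -
    have "1 \<le> (1 + b (Suc n)) * ?p"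
      using mult_mono[OF _ \<open>1 \<le> ?p\<close>, of 1 "1 + b (Suc n)"] b[of "Suc n"] by simp
    from mult_right_mono[OF ennreal_leI[OF this], of "ennreal (d (Suc n))"]
    show ?thesis
      by (intro add_left_mono) simp
  qed
  also have "\<dots> = ennreal ((1 + b (Suc n)) * ?p) * (\<Psi> 0 + ennreal ?s + ennreal (d (Suc n)))"
    using \<open>1 \<le> ?p\<close> b[of "Suc n"] by (simp add: ennreal_mult distrib_left mult.assoc)
  also have "\<dots> = ennreal (\<Prod>j=1..Suc n. 1 + b j) * (\<Psi> 0 + ennreal (\<Sum>j=1..Suc n. d j))"
    using d sum_nonneg[of "{1..n}" d] by (simp add: ennreal_plus add.assoc mult.commute)
  finally show ?case .
qed simp

lemma perturbed_descent_sum_bounded: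
  fixes \<Psi> x :: "nat \<Rightarrow> ennreal" and b d :: "nat \<Rightarrow> real"
  assumes step: "\<And>k. \<Psi> (Suc k) + x (Suc k) \<le> ennreal (1 + b (Suc k)) * \<Psi> k + ennreal (d (Suc k))"
    and b: "\<And>k. 0 \<le> b k" "summable (\<lambda>k. b (Suc k))"
    and d: "\<And>k. 0 \<le> d k" "summable (\<lambda>k. d (Suc k))"
  shows "(\<Sum>t=1..n. x t) \<le> ennreal (exp (\<Sum>k. b (Suc k))) * (\<Psi> 0 + ennreal (\<Sum>k. d (Suc k)))"
proof -
  have partial_le: "(\<Sum>j=1..n. f j) \<le> (\<Sum>k. f (Suc k))" if "\<And>k. 0 \<le> f k" "summable (\<lambda>k. f (Suc k))"
    for f :: "nat \<Rightarrow> real"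
    unfolding sum_bounds_lt_plus1[symmetric] using that by (intro sum_le_suminf) auto
  have "(\<Prod>j=1..n. 1 + b j) \<le> (\<Prod>j=1..n. exp (b j))"
    using b by (intro prod_mono) (auto simp: add_increasing2 exp_ge_add_one_self)
  also have "\<dots> \<le> exp (\<Sum>k. b (Suc k))"
    using partial_le[OF b] by (simp flip: exp_sum)
  finally have prod_le: "(\<Prod>j=1..n. 1 + b j) \<le> exp (\<Sum>k. b (Suc k))" .
  have "(\<Sum>t=1..n. x t) \<le> \<Psi> n + (\<Sum>t=1..n. x t)"
    by simp
  also have "\<dots> \<le> ennreal (\<Prod>j=1..n. 1 + b j) * (\<Psi> 0 + ennreal (\<Sum>j=1..n. d j))"
    by (rule perturbed_descent_le_prod[where \<Psi> = \<Psi> and x = x and b = b and d = d, OF step b(1) d(1)])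
  also have "\<dots> \<le> ennreal (exp (\<Sum>k. b (Suc k))) * (\<Psi> 0 + ennreal (\<Sum>k. d (Suc k)))"
    using prod_le partial_le[OF d] by (intro mult_mono add_left_mono ennreal_leI) auto
  finally show ?thesis .
qed

lemma AE_summable_if_weighted_nn_integral_sums_bounded:
  fixes f :: "nat \<Rightarrow> 'a \<Rightarrow> real" and w :: "nat \<Rightarrow> real"
  assumes f: "\<And>t. f t \<in> borel_measurable M" "\<And>t x. 0 \<le> f t x" and w: "\<And>t. 0 \<le> w (Suc t)"
    and bound: "\<And>n. (\<Sum>t=1..n. ennreal (w t) * (\<integral>\<^sup>+x. ennreal (f t x) \<partial>M)) \<le> ennreal B"
  shows "AE x in M. summable (\<lambda>t. w (Suc t) * f (Suc t) x)"
proof -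
  have "(\<integral>\<^sup>+x. (\<Sum>t. ennreal (w (Suc t) * f (Suc t) x)) \<partial>M)
      = (\<Sum>t. ennreal (w (Suc t)) * (\<integral>\<^sup>+x. ennreal (f (Suc t) x) \<partial>M))"
    using f w by (simp add: nn_integral_suminf ennreal_mult nn_integral_cmult)
  also have "\<dots> \<le> ennreal B"
    unfolding suminf_eq_SUP
    using bound sum_bounds_lt_plus1[of "\<lambda>t. ennreal (w t) * (\<integral>\<^sup>+x. ennreal (f t x) \<partial>M)"]
    by (auto intro: SUP_least)
  finally have "(\<integral>\<^sup>+x. (\<Sum>t. ennreal (w (Suc t) * f (Suc t) x)) \<partial>M) \<noteq> \<infinity>"
    using neq_top_trans[OF ennreal_neq_top] by simp
  then have "AE x in M. (\<Sum>t. ennreal (w (Suc t) * f (Suc t) x)) \<noteq> \<infinity>"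
    using f by (intro nn_integral_PInf_AE) simp_all
  then show ?thesis
    by eventually_elim (rule summable_suminf_not_top, use f w in simp_all)
qed

lemma sgdm_gradient_sum_bounded:
  fixes DG :: "'a::euclidean_space \<Rightarrow> 'b \<Rightarrow> 'a" and \<theta>1 v0 :: 'a
  assumes P: "prob_space P"
    and \<xi>_measurable: "\<And>n. \<xi> n \<in> measurable P E"
    and \<xi>_indep: "prob_space.indep_vars P (\<lambda>_. E) \<xi> {1..}"
    and DG_measurable: "(\<lambda>(x, e). DG x e) \<in> borel_measurable (borel \<Otimes>\<^sub>M E)"
    and L: "\<And>k. momentum_lyapunov (distr P E (\<xi> (Suc k))) g Dg G DG c M \<alpha> \<epsilon>_max"
    and \<epsilon>: "\<And>k. 0 < \<epsilon> (Suc k)" "\<And>k. \<epsilon> (Suc k) \<le> \<epsilon>_max"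
    and \<epsilon>_sq: "summable (\<lambda>k. (\<epsilon> (Suc k))\<^sup>2)"
  shows "\<exists>B\<ge>0. \<forall>n. (\<Sum>t=1..n. ennreal (\<epsilon> t) *
    (\<integral>\<^sup>+\<omega>. ennreal ((norm (Dg (sgdm_theta \<alpha> \<epsilon> DG \<xi> \<theta>1 v0 t \<omega>)))\<^sup>2) \<partial>P)) \<le> ennreal B"
proof -
  interpret prob_space P by (rule P)
  define \<Phi> where "\<Phi> = momentum_lyapunov.lyapunov g c \<alpha> \<epsilon>_max"
  define C where "C = momentum_lyapunov.growth_const c M \<alpha> \<epsilon>_max"
  define S where "S = sgdm_state \<alpha> \<epsilon> DG \<xi> \<theta>1 v0"
  define \<Psi> where "\<Psi> k = (\<integral>\<^sup>+\<omega>. ennreal (\<Phi> (fst (S k \<omega>)) (snd (S k \<omega>))) \<partial>P)" for k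
  define I where "I t = (\<integral>\<^sup>+\<omega>. ennreal ((norm (Dg (sgdm_theta \<alpha> \<epsilon> DG \<xi> \<theta>1 v0 t \<omega>)))\<^sup>2) \<partial>P)" for t
  have "0 \<le> C" "0 \<le> \<Phi> \<theta>1 v0"
    using momentum_lyapunov.growth_const_nonneg[OF L] momentum_lyapunov.lyapunov_nonneg[OF L]
    by (auto simp: C_def \<Phi>_def)
  have "\<Psi> (Suc k) + ennreal (\<epsilon> (Suc k)) * I (Suc k)
      \<le> ennreal (1 + C * (\<epsilon> (Suc k))\<^sup>2) * \<Psi> k + ennreal (2 * C * (\<epsilon> (Suc k))\<^sup>2)" for k
    using sgdm_lyapunov_step[where \<xi> = \<xi> and \<epsilon> = \<epsilon> and k = k and ?\<theta>1.0 = \<theta>1 and ?v0.0 = v0,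
        OF P \<xi>_measurable \<xi>_indep DG_measurable L \<epsilon>]
    by (simp add: \<Psi>_def I_def \<Phi>_def C_def S_def sgdm_theta_def)
  from perturbed_descent_sum_bounded[where b = "\<lambda>k. C * (\<epsilon> k)\<^sup>2" and d = "\<lambda>k. 2 * C * (\<epsilon> k)\<^sup>2",
      OF this]
  have "(\<Sum>t=1..n. ennreal (\<epsilon> t) * I t)
      \<le> ennreal (exp (\<Sum>k. C * (\<epsilon> (Suc k))\<^sup>2)) * (\<Psi> 0 + ennreal (\<Sum>k. 2 * C * (\<epsilon> (Suc k))\<^sup>2))" for n
    using \<open>0 \<le> C\<close> \<epsilon>_sq by (simp add: summable_mult)
  moreover have "\<Psi> 0 = ennreal (\<Phi> \<theta>1 v0)"
    by (simp add: \<Psi>_def S_def emeasure_space_1)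
  moreover have "0 \<le> (\<Sum>k. 2 * C * (\<epsilon> (Suc k))\<^sup>2)"
    using \<open>0 \<le> C\<close> \<epsilon>_sq by (intro suminf_nonneg summable_mult) auto
  ultimately show ?thesis
    using \<open>0 \<le> \<Phi> \<theta>1 v0\<close>
    by (intro exI[of _ "exp (\<Sum>k. C * (\<epsilon> (Suc k))\<^sup>2) * (\<Phi> \<theta>1 v0 + (\<Sum>k. 2 * C * (\<epsilon> (Suc k))\<^sup>2))"])
      (simp add: I_def ennreal_mult ennreal_plus)
qed

theorem lemma8:
  fixes P :: "'w measure" and E :: "'b measure"
    and \<xi> :: "nat \<Rightarrow> 'w \<Rightarrow> 'b"
    and g :: "'a::euclidean_space \<Rightarrow> real" and Dg :: "'a \<Rightarrow> 'a"
    and G :: "'a \<Rightarrow> 'b \<Rightarrow> real" and DG :: "'a \<Rightarrow> 'b \<Rightarrow> 'a"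
    and \<theta>1 v0 :: 'a and \<alpha> Mc :: real and \<epsilon> :: "nat \<Rightarrow> real"
  assumes prob: "prob_space P"
    and xi_meas: "\<And>n. \<xi> n \<in> measurable P E"
    and xi_indep: "prob_space.indep_vars P (\<lambda>_. E) \<xi> {1..}"
    and G_meas: "\<And>x. (\<lambda>e. G x e) \<in> borel_measurable E"
    and DG_meas: "(\<lambda>(x, e). DG x e) \<in> borel_measurable (borel \<Otimes>\<^sub>M E)"
    and G_diff: "\<And>x e. e \<in> space E \<Longrightarrow> ((\<lambda>y. G y e) has_derivative (\<lambda>h. DG x e \<bullet> h)) (at x)"
    and g_mean: "\<And>x n. n \<ge> 1 \<Longrightarrow> has_bochner_integral (distr P E (\<xi> n)) (G x) (g x)"
    and g_nonneg: "\<And>x. g x \<ge> 0"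
    and g_diff: "\<And>x. (g has_derivative (\<lambda>h. Dg x \<bullet> h)) (at x)"
    and Dg_cont: "continuous_on UNIV Dg"
    and crit: "\<exists>\<theta>. Dg \<theta> = 0"
    and lip: "\<exists>c>0. \<forall>x y. norm (Dg x - Dg y) \<le> c * norm (x - y)"
    and Mc_pos: "Mc > 0"
    and var_bound: "\<And>\<theta> n. n \<ge> 1 \<Longrightarrow>
        (\<integral>\<^sup>+ e. ennreal ((norm (Dg \<theta> - DG \<theta> e))\<^sup>2) \<partial>distr P E (\<xi> n))
          \<le> ennreal (Mc * (1 + g \<theta>))"
    and alpha: "0 \<le> \<alpha>" "\<alpha> < 1"
    and eps_pos: "\<And>n. n \<ge> 1 \<Longrightarrow> \<epsilon> n > 0"
    and eps_mono: "\<And>n. n \<ge> 1 \<Longrightarrow> \<epsilon> (Suc n) \<le> \<epsilon> n"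
    and eps_lim: "\<epsilon> \<longlonglongrightarrow> 0"
    and eps_sum: "\<not> summable (\<lambda>n. \<epsilon> (Suc n))"
    and eps_sq: "summable (\<lambda>n. (\<epsilon> (Suc n))\<^sup>2)"
  shows "(\<exists>B>0. \<forall>n\<ge>1.
            (\<Sum>t=1..n. ennreal (\<epsilon> t) *
               (\<integral>\<^sup>+ \<omega>. ennreal ((norm (Dg (sgdm_theta \<alpha> \<epsilon> DG \<xi> \<theta>1 v0 t \<omega>)))\<^sup>2) \<partial>P))
            < ennreal B)
       \<and> (AE \<omega> in P. summable (\<lambda>t. \<epsilon> (Suc t) *
               (norm (Dg (sgdm_theta \<alpha> \<epsilon> DG \<xi> \<theta>1 v0 (Suc t) \<omega>)))\<^sup>2))"
proof -
  \<comment> \<open>The bound only needs \<open>\<Sum>\<epsilon>\<^sup>2 < \<infinity>\<close>.\<close>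
  interpret P: prob_space P by (rule prob)
  obtain c where "c > 0" and Dg_lip: "\<And>x y. norm (Dg x - Dg y) \<le> c * norm (x - y)"
    using lip by blast
  have \<epsilon>_Suc: "0 < \<epsilon> (Suc k)" "\<epsilon> (Suc k) \<le> \<epsilon> 1" for k
    using eps_pos lift_Suc_antimono_le[of "\<lambda>m. \<epsilon> (Suc m)" 0 k] eps_mono by simp_all
  have "momentum_lyapunov (distr P E (\<xi> (Suc k))) g Dg G DG c Mc \<alpha> (\<epsilon> 1)" for k
  proof (intro momentum_lyapunov.intro momentum_lyapunov_axioms.intro stochastic_gradient.intro
      stochastic_gradient_axioms.intro)
    show "(\<lambda>(x, e). DG x e) \<in> borel_measurable (borel \<Otimes>\<^sub>M distr P E (\<xi> (Suc k)))"
      using DG_meas by (subst measurable_cong_sets[OF sets_pair_measure_cong refl]) simp_all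
  qed (use P.prob_space_distr xi_meas G_diff g_mean g_diff Dg_lip var_bound g_nonneg
         \<open>c > 0\<close> Mc_pos alpha eps_pos[of 1] in auto)
  from sgdm_gradient_sum_bounded[where \<xi> = \<xi> and \<epsilon> = \<epsilon> and \<epsilon>_max = "\<epsilon> 1",
      OF prob xi_meas xi_indep DG_meas this \<epsilon>_Suc eps_sq]
  obtain B where "0 \<le> B" and bound: "\<And>n. (\<Sum>t=1..n. ennreal (\<epsilon> t) *
      (\<integral>\<^sup>+\<omega>. ennreal ((norm (Dg (sgdm_theta \<alpha> \<epsilon> DG \<xi> \<theta>1 v0 t \<omega>)))\<^sup>2) \<partial>P)) \<le> ennreal B"
    by blast
  note [measurable] = measurable_sgdm_theta[OF DG_meas xi_meas] borel_measurable_continuous_onI[OF Dg_cont]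
  show ?thesis
    using \<open>0 \<le> B\<close> ennreal_lessI[of "B + 1" B] \<epsilon>_Suc
    by (intro conjI exI[of _ "B + 1"] allI impI order.strict_trans1[OF bound]
        AE_summable_if_weighted_nn_integral_sums_bounded[OF _ _ _ bound]) (auto simp: less_imp_le)
qed

end
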